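(* Assume the setup of the context and let $t\in\mathbb{R}$ be proper, with $A+tB=u(x,y;t)\prod_{j=1}^M(y+q_j(x)+x^{2L_j}\psi_j(x;t))$ as in the definition of proper. Then for each $j=1,\dots,M$, $$\mathrm{Ord}\bigl(B(x,-q_j(x)-x^{2L_j}\psi_j(x;t))\bigr)=\sum_{i=1}^MO_{ij}=2L_j+\sum_{i\ne j}O_{ij},$$ $$\mathrm{Ord}\bigl((A_y+tB_y)(x,-q_j(x)-x^{2L_j}\psi_j(x;t))\bigr)=\sum_{i\neq j}O_{ij}.$$
   Context: Setup: $P\in\mathbb{C}[x,y]$ has no zeros in $\mathbb{R}\times\mathbb{H}$ ($\mathbb{H}=\{\operatorname{Im}z>0\}$), no factors in common with $\bar P(x,y)=\overline{P(\bar x,\bar y)}$, $M=\mathrm{Ord}(P(0,y))$, and the coefficient of $y^M$ in $P(0,y)$ is real. Locally $P=u\prod_{j=1}^M(y+q_j(x)+x^{2L_j}\psi_j(x^{1/k}))$ with $u$ a unit, $k\ge1$, $L_j\in\mathbb{N}$, $q_j\in\mathbb{R}[x]$, $q_j(0)=0$, $\deg q_j<2L_j$, $\psi_j\in\mathbb{C}\{x\}$, $\operatorname{Im}\psi_j(0)>0$. $A=\tfrac12(P+\bar P)$, $B=\tfrac1{2i}(P-\bar P)$, subscripts $y$ denote $\partial/\partial y$. $O_{ij}=\min\{\mathrm{Ord}(q_j-q_i),2L_j,2L_i\}$, Ord = order of vanishing at $0$. A real $t$ is called proper if there is a local factorization $A+tB=u(x,y;t)\prod_{j=1}^M(y+q_j(x)+x^{2L_j}\psi_j(x;t))$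 with $u(\cdot,\cdot;t)$ a unit in $\mathbb{C}\{x,y\}$, $\psi_j(\cdot;t)\in\mathbb{R}\{x\}$, and $\mathrm{Ord}(q_j-q_i+x^{2L_j}\psi_j(x;t)-x^{2L_i}\psi_i(x;t))=O_{ij}$ for all $i\ne j$ (all but finitely many $t$ are proper). *)

theory Defs
  imports "HOL-Analysis.Analysis" "HOL-Computational_Algebra.Polynomial"
begin

text \<open>Bivariate polynomials P in C[x,y] are represented as polynomials in y whose
  coefficients are polynomials in x (type complex poly poly).\<close>

definition pev :: "complex poly poly \<Rightarrow> complex \<Rightarrow> complex \<Rightarrow> complex" where
  "pev P x y = poly (map_poly (\<lambda>c. poly c x) P) y"

definition at_x0 :: "complex poly poly \<Rightarrow> complex poly" where
  "at_x0 P = map_poly (\<lambda>c. poly c 0) P"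

text \<open>bar P (x,y) = conj (P (conj x, conj y)): conjugate all coefficients.\<close>
definition pbar :: "complex poly poly \<Rightarrow> complex poly poly" where
  "pbar P = map_poly (map_poly cnj) P"

definition Apart :: "complex poly poly \<Rightarrow> complex \<Rightarrow> complex \<Rightarrow> complex" where
  "Apart P x y = (pev P x y + pev (pbar P) x y) / 2"

definition Bpart :: "complex poly poly \<Rightarrow> complex \<Rightarrow> complex \<Rightarrow> complex" where
  "Bpart P x y = (pev P x y - pev (pbar P) x y) / (2 * \<i>)"

definition Ord :: "(complex \<Rightarrow> complex) \<Rightarrow> enat" where
  "Ord f = (if \<exists>n. (deriv ^^ n) f 0 \<noteq> 0
            then enat (LEAST n. (deriv ^^ n) f 0 \<noteq> 0) else \<infinity>)"

definition cps1 :: "(complex \<Rightarrow> complex) \<Rightarrow> bool" where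
  "cps1 f \<longleftrightarrow> (\<exists>r>0. \<exists>a::nat \<Rightarrow> complex. \<forall>x. norm x < r \<longrightarrow>
        (\<lambda>n. a n * x ^ n) sums f x)"

definition rps1 :: "(complex \<Rightarrow> complex) \<Rightarrow> bool" where
  "rps1 f \<longleftrightarrow> (\<exists>r>0. \<exists>a::nat \<Rightarrow> real. \<forall>x. norm x < r \<longrightarrow>
        (\<lambda>n. complex_of_real (a n) * x ^ n) sums f x)"

definition cps2 :: "(complex \<Rightarrow> complex \<Rightarrow> complex) \<Rightarrow> bool" where
  "cps2 u \<longleftrightarrow> (\<exists>r>0. \<exists>a::nat \<Rightarrow> nat \<Rightarrow> complex. \<forall>x y. norm x < r \<longrightarrow> norm y < r \<longrightarrow>
        ((\<lambda>(m,n). a m n * x ^ m * y ^ n) has_sum u x y) UNIV)"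

definition unit2 :: "(complex \<Rightarrow> complex \<Rightarrow> complex) \<Rightarrow> bool" where
  "unit2 u \<longleftrightarrow> cps2 u \<and> u 0 0 \<noteq> 0"

definition Oij :: "(nat \<Rightarrow> real poly) \<Rightarrow> (nat \<Rightarrow> nat) \<Rightarrow> nat \<Rightarrow> nat \<Rightarrow> enat" where
  "Oij q L i j = min (Ord (\<lambda>x. poly (map_poly of_real (q j - q i)) x))
                     (min (enat (2 * L j)) (enat (2 * L i)))"

end

theory Submission
  imports Defs "HOL-Complex_Analysis.Complex_Analysis"
begin

text \<open>Write y_j(x) = -q_j(x) - x^(2 L_j) \<psi>_j(x;t) for the j-th zero of A + tB. On it A = -tB,
  hence P = A + iB = (i - t) B, and the order of B(x, y_j(x)) is the sum of the orders of the
  Puiseux factors of P evaluated at y = y_j(x). In the variable s with x = s^k the i-th factor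
  is (y_j - y_i)(x) + x^(2 L_i) (\<psi>_i(s) - \<psi>_i(x;t)). The first summand is real on the real axis
  and, for i \<noteq> j, has order exactly O_ij because t is proper; the second has order 2 L_i and a
  leading coefficient with positive imaginary part. So no cancellation can occur and the factor
  has order O_ij, with O_jj = 2 L_j. For the derivative, A + tB = ut (y - y_j) R with R the
  product of the other factors, so d/dy (A + tB) equals ut R at y = y_j, of order
  \<Sum>_(i\<noteq>j) O_ij. All orders are computed as the exponent m for which f(x)/x^m has a nonzero
  limit at 0.\<close>

section \<open>Evaluating bivariate polynomials\<close>

lemma map_poly_eval_pderiv:
  "map_poly (\<lambda>c. poly c x) (pderiv P) = pderiv (map_poly (\<lambda>c. poly c x) P)"
  by (simp add: poly_eq_iff coeff_map_poly coeff_pderiv of_nat_poly)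

lemma has_field_derivative_pev:
  "((\<lambda>y. pev P x y) has_field_derivative pev (pderiv P) x y) (at y)"
  unfolding pev_def map_poly_eval_pderiv by (rule poly_DERIV)

lemma pev_eq_sum: "pev P x y = (\<Sum>i\<le>degree P. poly (coeff P i) x * y ^ i)"
proof -
  let ?p = "map_poly (\<lambda>c. poly c x) P"
  have "degree ?p \<le> degree P"
    by (rule degree_le) (simp add: coeff_map_poly coeff_eq_0)
  then have "poly ?p y = poly (\<Sum>i\<le>degree P. monom (coeff ?p i) i) y"
    by (simp add: poly_as_sum_of_monoms')
  then show ?thesis by (simp add: pev_def poly_sum poly_monom coeff_map_poly)
qed

lemma analytic_on_poly [analytic_intros]:
  fixes p :: "complex poly"
  assumes "f analytic_on S"
  shows "(\<lambda>z. poly p (f z)) analytic_on S"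
  using analytic_on_compose_gen[OF assms, of "poly p" UNIV]
  by (auto simp: analytic_on_open comp_def poly_holomorphic_on)

lemma analytic_on_pev [analytic_intros]:
  assumes "f analytic_on S" and "g analytic_on S"
  shows "(\<lambda>z. pev P (f z) (g z)) analytic_on S"
  unfolding pev_eq_sum by (intro analytic_intros assms)

lemma poly_map_poly_of_real:
  "poly (map_poly of_real p) (of_real x) = (of_real (poly p x) :: 'a::{real_algebra_1,comm_semiring_0})"
  by (induction p) (auto simp: map_poly_pCons)

lemma map_poly_of_real_diff:
  "map_poly (of_real :: real \<Rightarrow> 'a::real_algebra_1) (p - q) = map_poly of_real p - map_poly of_real q"
  by (simp add: poly_eq_iff coeff_map_poly)

section \<open>Orders of vanishing\<close>

lemma Ord_eq_infinity_imp_eventually_zero: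
  assumes "f analytic_on {0}" and "Ord f = \<infinity>"
  shows "\<forall>\<^sub>F x in at 0. f x = 0"
proof -
  obtain r where r: "r > 0" and hol: "f holomorphic_on ball 0 r"
    using assms(1) analytic_at_ball by blast
  have derivs: "(deriv ^^ n) f 0 = 0" for n
    using assms(2) by (auto simp: Ord_def split: if_splits)
  have "f w = 0" if "w \<in> ball 0 r" for w
  proof -
    have "(\<lambda>n. (deriv ^^ n) f 0 / fact n * (w - 0) ^ n) sums f w"
      by (rule holomorphic_power_series[OF hol that])
    then show ?thesis by (simp add: derivs sums_0 sums_unique2)
  qed
  then show ?thesis
    using r by (auto simp: eventually_at dist_norm)
qed

lemma Ord_eq_enat_imp_tendsto:
  assumes "f analytic_on {0}" and "Ord f = enat m"
  obtains c where "c \<noteq> 0" and "((\<lambda>x. f x / x ^ m) \<longlongrightarrow> c) (at 0)"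
proof -
  have ex: "\<exists>n. (deriv ^^ n) f 0 \<noteq> 0" and m: "m = (LEAST n. (deriv ^^ n) f 0 \<noteq> 0)"
    using assms(2) by (auto simp: Ord_def split: if_splits)
  have dm: "(deriv ^^ m) f 0 \<noteq> 0"
    using LeastI_ex[OF ex] m by simp
  have below: "(deriv ^^ i) f 0 = 0" if "i < m" for i
    using not_less_Least[of i "\<lambda>n. (deriv ^^ n) f 0 \<noteq> 0"] that m by auto
  obtain r where r: "r > 0" and hol: "f holomorphic_on ball 0 r"
    using assms(1) analytic_at_ball by blast
  show ?thesis
  proof (cases "m = 0")
    case True
    then show ?thesis
      using that[of "f 0"] dm analytic_at_imp_isCont[OF assms(1)] by (simp add: isCont_def)
  next
    case False
    obtain g r' where r': "r' > 0" and g: "g holomorphic_on ball 0 r'"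
      and fg: "\<And>w. w \<in> ball 0 r' \<Longrightarrow> f w - f 0 = (w - 0) ^ m * g w"
      and g_nz: "\<And>w. w \<in> ball 0 r' \<Longrightarrow> g w \<noteq> 0"
    proof (rule holomorphic_factor_order_of_zero[OF hol open_ball _ _ dm])
      show "0 \<in> ball (0::complex) r" and "0 < m"
        using r False by simp_all
    qed (use below in blast)+
    have "f 0 = 0"
      using below[of 0] False by simp
    then have "g x = f x / x ^ m" if "x \<noteq> 0" "dist x 0 < r'" for x
      using fg[of x] that by (simp add: dist_norm)
    then have "\<forall>\<^sub>F x in at 0. g x = f x / x ^ m"
      unfolding eventually_at using r' by blast
    moreover have "(g \<longlongrightarrow> g 0) (at 0)"
      using g r' by (metis centre_in_ball continuous_on_interior holomorphic_on_imp_continuous_on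
          interior_ball isCont_def)
    ultimately have "((\<lambda>x. f x / x ^ m) \<longlongrightarrow> g 0) (at 0)"
      by (rule Lim_transform_eventually[rotated])
    then show ?thesis
      using that g_nz[of 0] r' by simp
  qed
qed

lemma eq_if_tendsto_power_quotient:
  assumes "((\<lambda>s::complex. s ^ a / s ^ b) \<longlongrightarrow> c) (at 0)" and "c \<noteq> 0"
  shows "a = b"
proof (rule ccontr)
  have small: "((\<lambda>s::complex. s ^ n) \<longlongrightarrow> 0) (at 0)" if "n > 0" for n
    using that by (intro tendsto_eq_intros) (auto simp: zero_power)
  have nz: "\<forall>\<^sub>F s in at (0::complex). s \<noteq> 0"
    by (simp add: eventually_at_filter)
  assume "a \<noteq> b"
  then consider "a > b" | "a < b" by linarith
  then show False
  proof cases
    case 1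
    have "\<forall>\<^sub>F s in at 0. s ^ (a - b) = (s ^ a / s ^ b :: complex)"
      using nz by eventually_elim (use 1 in \<open>simp add: power_diff\<close>)
    then have "((\<lambda>s::complex. s ^ a / s ^ b) \<longlongrightarrow> 0) (at 0)"
      using small[of "a - b"] 1 by (auto intro: Lim_transform_eventually)
    with assms show False
      using tendsto_unique[OF at_neq_bot] by blast
  next
    case 2
    have "\<forall>\<^sub>F s in at 0. inverse (s ^ a / s ^ b :: complex) = s ^ (b - a)"
      using nz by eventually_elim (use 2 in \<open>simp add: power_diff\<close>)
    moreover have "((\<lambda>s::complex. inverse (s ^ a / s ^ b)) \<longlongrightarrow> inverse c) (at 0)"
      using assms by (intro tendsto_inverse) auto
    ultimately have "((\<lambda>s::complex. s ^ (b - a)) \<longlongrightarrow> inverse c) (at 0)"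
      by (rule Lim_transform_eventually[rotated])
    moreover have "((\<lambda>s::complex. s ^ (b - a)) \<longlongrightarrow> 0) (at 0)"
      using small 2 by simp
    ultimately have "inverse c = 0"
      using tendsto_unique[OF at_neq_bot] by blast
    with assms(2) show False
      by simp
  qed
qed

lemma filterlim_power_at_0:
  assumes "k \<ge> 1"
  shows "filterlim (\<lambda>s::complex. s ^ k) (at 0) (at 0)"
proof (rule filterlim_atI)
  show "((\<lambda>s::complex. s ^ k) \<longlongrightarrow> 0) (at 0)"
    using assms by (intro tendsto_eq_intros) (auto simp: zero_power)
  have "\<forall>\<^sub>F s in at (0::complex). s \<noteq> 0"
    by (simp add: eventually_at_filter)
  then show "\<forall>\<^sub>F s in at (0::complex). s ^ k \<noteq> 0"
    by eventually_elim simp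
qed

lemma Ord_eq_enat_if_tendsto_ramified:
  assumes "f analytic_on {0}" and "k \<ge> 1"
    and lim: "((\<lambda>s. f (s ^ k) / s ^ (k * m)) \<longlongrightarrow> c) (at 0)" and "c \<noteq> 0"
  shows "Ord f = enat m"
proof (cases "Ord f")
  case infinity
  have "\<forall>\<^sub>F s in at 0. f (s ^ k) = 0"
    by (rule eventually_compose_filterlim[OF Ord_eq_infinity_imp_eventually_zero[OF assms(1) infinity]
          filterlim_power_at_0[OF assms(2)]])
  then have "\<forall>\<^sub>F s in at 0. f (s ^ k) / s ^ (k * m) = 0"
    by eventually_elim simp
  then have "((\<lambda>s. f (s ^ k) / s ^ (k * m)) \<longlongrightarrow> 0) (at 0)"
    by (rule tendsto_eventually)
  with lim \<open>c \<noteq> 0\<close> show ?thesis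
    using tendsto_unique[OF at_neq_bot] by blast
next
  case (enat n)
  obtain d where "d \<noteq> 0" and "((\<lambda>x. f x / x ^ n) \<longlongrightarrow> d) (at 0)"
    using Ord_eq_enat_imp_tendsto[OF assms(1) enat] by blast
  then have lim_n: "((\<lambda>s. f (s ^ k) / s ^ (k * n)) \<longlongrightarrow> d) (at 0)"
    using filterlim_compose[OF _ filterlim_power_at_0[OF assms(2)]] by (simp add: power_mult)
  have "\<forall>\<^sub>F s in at 0. f (s ^ k) / s ^ (k * n) \<noteq> 0"
    using tendsto_imp_eventually_ne[OF lim_n \<open>d \<noteq> 0\<close>] .
  moreover have "\<forall>\<^sub>F s in at (0::complex). s \<noteq> 0"
    by (simp add: eventually_at_filter)
  ultimately have "\<forall>\<^sub>F s in at 0.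
      (f (s ^ k) / s ^ (k * m)) / (f (s ^ k) / s ^ (k * n)) = s ^ (k * n) / s ^ (k * m)"
    by eventually_elim (simp add: field_simps)
  moreover have "((\<lambda>s. (f (s ^ k) / s ^ (k * m)) / (f (s ^ k) / s ^ (k * n))) \<longlongrightarrow> c / d) (at 0)"
    using lim lim_n \<open>d \<noteq> 0\<close> by (rule tendsto_divide)
  ultimately have "((\<lambda>s::complex. s ^ (k * n) / s ^ (k * m)) \<longlongrightarrow> c / d) (at 0)"
    by (rule Lim_transform_eventually[rotated])
  then have "k * n = k * m"
    by (rule eq_if_tendsto_power_quotient) (use \<open>c \<noteq> 0\<close> \<open>d \<noteq> 0\<close> in simp)
  then show ?thesis
    using enat assms(2) by simp
qed

corollary Ord_eq_enat_if_tendsto: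
  assumes "f analytic_on {0}" and "((\<lambda>x. f x / x ^ m) \<longlongrightarrow> c) (at 0)" and "c \<noteq> 0"
  shows "Ord f = enat m"
  using Ord_eq_enat_if_tendsto_ramified[of f 1 m c] assms by simp

lemma Oij_le: "Oij q L i j \<le> enat (2 * L i)"
  unfolding Oij_def by (simp add: min_le_iff_disj)

lemma Oij_self: "Oij q L j j = enat (2 * L j)"
proof -
  have "poly (map_poly (of_real :: real \<Rightarrow> complex) (q j - q j)) = (\<lambda>x. 0)"
    by auto
  moreover have "(deriv ^^ n) (\<lambda>x::complex. 0::complex) = (\<lambda>x. 0)" for n
    by (induction n) auto
  ultimately show ?thesis
    unfolding Oij_def Ord_def by simp
qed

lemma tendsto_Reals_at_0:
  fixes h :: "complex \<Rightarrow> complex"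
  assumes "(h \<longlongrightarrow> c) (at 0)" and "\<forall>\<^sub>F x in at 0. x \<in> \<real> \<longrightarrow> h x \<in> \<real>"
  shows "c \<in> \<real>"
proof (rule Lim_in_closed_set[OF closed_complex_Reals])
  have "(0::complex) islimpt \<real>"
    unfolding islimpt_approachable_le
  proof (intro allI impI)
    fix e :: real assume "e > 0"
    then show "\<exists>x::complex\<in>\<real>. x \<noteq> 0 \<and> dist x 0 \<le> e"
      by (intro bexI[of _ "of_real e"]) auto
  qed
  then show "\<not> trivial_limit (at (0::complex) within \<real>)"
    by (simp add: trivial_limit_within)
  show "\<forall>\<^sub>F x in at 0 within \<real>. h x \<in> \<real>"
    using assms(2) by (simp add: eventually_at_filter)
  show "(h \<longlongrightarrow> c) (at 0 within \<real>)"
    using assms(1) by (rule tendsto_within_subset) simp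
qed

lemma tendsto_cofactor_at_root:
  fixes g v R :: "'a::real_normed_field \<Rightarrow> 'a"
  assumes "(g has_field_derivative D) (at y0)" and "g y0 = 0"
    and "\<forall>\<^sub>F y in at y0. g y = v y * ((y - y0) * R y)"
    and "isCont R y0" and "R y0 \<noteq> 0"
  shows "(v \<longlongrightarrow> D / R y0) (at y0)"
proof -
  have quotient: "((\<lambda>y. (g y - g y0) / (y - y0) / R y) \<longlongrightarrow> D / R y0) (at y0)"
    using assms(1,4,5) by (intro tendsto_divide) (auto simp: has_field_derivative_iff isCont_def)
  have "\<forall>\<^sub>F y in at y0. R y \<noteq> 0"
    using assms(4,5) by (simp add: isCont_def tendsto_imp_eventually_ne)
  moreover have "\<forall>\<^sub>F y in at y0. y \<noteq> y0"
    by (simp add: eventually_at_filter)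
  ultimately have "\<forall>\<^sub>F y in at y0. (g y - g y0) / (y - y0) / R y = v y"
    using assms(3) by eventually_elim (use assms(2) in auto)
  with quotient show ?thesis
    by (rule Lim_transform_eventually)
qed

lemma norm_limit_diff_le:
  fixes v :: "complex \<Rightarrow> complex"
  assumes "(v \<longlongrightarrow> w) (at y0)" and "\<forall>\<^sub>F y in at y0. norm (v y - a) \<le> C * (b + norm y)"
  shows "norm (w - a) \<le> C * (b + norm y0)"
proof (rule tendsto_le[OF at_neq_bot])
  show "((\<lambda>y. norm (v y - a)) \<longlongrightarrow> norm (w - a)) (at y0)"
    using assms(1) by (intro tendsto_intros)
  show "((\<lambda>y. C * (b + norm y)) \<longlongrightarrow> C * (b + norm y0)) (at y0)"
    by (intro tendsto_intros)
qed (use assms(2) in simp)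

section \<open>Germs of convergent power series\<close>

lemma cps1_analytic_at_0:
  assumes "cps1 f"
  shows "f analytic_on {0}"
proof -
  obtain r a where r: "r > 0" and sums: "\<And>x. norm x < r \<Longrightarrow> (\<lambda>n. a n * x ^ n) sums f x"
    using assms unfolding cps1_def by blast
  have "f holomorphic_on ball 0 r"
    by (rule power_series_holomorphic[where a = a]) (simp add: sums)
  then show ?thesis
    using r analytic_at_ball by blast
qed

lemma rps1_imp_cps1: "rps1 f \<Longrightarrow> cps1 f"
  unfolding rps1_def cps1_def by (elim exE conjE, intro exI conjI) auto

lemma rps1_real_near_0:
  assumes "rps1 f"
  shows "\<forall>\<^sub>F x in at 0. x \<in> \<real> \<longrightarrow> f x \<in> \<real>"
proof -
  obtain r a where r: "r > 0"
    and sums: "\<And>x. norm x < r \<Longrightarrow> (\<lambda>n. complex_of_real (a n) * x ^ n) sums f x"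
    using assms unfolding rps1_def by blast
  have real: "f (of_real x) \<in> \<real>" if "norm (of_real x :: complex) < r" for x
  proof -
    have "(\<lambda>n. of_real (a n * x ^ n)) sums f (of_real x)"
      using sums[OF that] by simp
    then have "(\<lambda>n. 0) sums Im (f (of_real x))"
      using sums_Im by fastforce
    then have "Im (f (of_real x)) = 0"
      using sums_0 sums_unique2 by blast
    then show ?thesis
      by (simp add: complex_is_Real_iff)
  qed
  have "x \<in> \<real> \<longrightarrow> f x \<in> \<real>" if "dist x 0 < r" for x
  proof
    assume "x \<in> \<real>"
    then obtain x' where "x = of_real x'"
      by (rule Reals_cases)
    with that show "f x \<in> \<real>"
      using real by (simp add: dist_norm)
  qed
  then show ?thesis
    unfolding eventually_at using r by blast
qed

lemma norm_monomial_le: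
  fixes x y :: complex
  assumes "norm x \<le> \<rho>" and "norm y \<le> \<rho>" and "\<rho> > 0" and "(m, n) \<noteq> (0, 0)"
  shows "norm (x ^ m * y ^ n) \<le> (norm x + norm y) / \<rho> * \<rho> ^ (m + n)"
proof -
  define \<mu> where "\<mu> = max (norm x) (norm y)"
  have \<mu>: "norm x \<le> \<mu>" "norm y \<le> \<mu>" "\<mu> \<le> \<rho>" "\<mu> \<le> norm x + norm y"
    using assms by (auto simp: \<mu>_def)
  obtain d where d: "m + n = Suc d"
    using assms(4) by (metis add_is_0 not0_implies_Suc)
  have "norm (x ^ m * y ^ n) \<le> \<mu> ^ m * \<mu> ^ n"
    unfolding norm_mult norm_power using \<mu> by (intro mult_mono power_mono) auto
  also have "\<dots> = \<mu> * \<mu> ^ d"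
    by (simp flip: power_add add: d)
  also have "\<dots> \<le> (norm x + norm y) * \<rho> ^ d"
    using \<mu> by (intro mult_mono power_mono) (auto intro: order_trans[OF norm_ge_zero])
  also have "\<dots> = (norm x + norm y) / \<rho> * \<rho> ^ (m + n)"
    using assms(3) by (simp add: d)
  finally show ?thesis .
qed

text \<open>A convergent double power series is Lipschitz at the origin: compare termwise with the
  absolutely convergent series at a smaller polyradius.\<close>

lemma cps2_lipschitz_at_origin:
  assumes "cps2 u"
  obtains \<delta> C where "\<delta> > 0" and "C \<ge> 0"
    and "\<And>x y. norm x < \<delta> \<Longrightarrow> norm y < \<delta> \<Longrightarrow> norm (u x y - u 0 0) \<le> C * (norm x + norm y)"
proof -
  obtain r a where r: "r > 0" and hs: "\<And>x y. norm x < r \<Longrightarrow> norm y < r \<Longrightarrow>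
        ((\<lambda>(m, n). a m n * x ^ m * y ^ n) has_sum u x y) UNIV"
    using assms unfolding cps2_def by blast
  define \<rho> where "\<rho> = r / 2"
  have \<rho>: "\<rho> > 0" "\<rho> < r"
    using r by (auto simp: \<rho>_def)
  define b where "b = (\<lambda>(m, n). norm (a m n) * \<rho> ^ (m + n))"
  have "(\<lambda>(m, n). a m n * of_real \<rho> ^ m * of_real \<rho> ^ n) summable_on UNIV"
    using hs[of "of_real \<rho>" "of_real \<rho>"] \<rho> has_sum_imp_summable by simp
  then have "(\<lambda>p. norm ((\<lambda>(m, n). a m n * of_real \<rho> ^ m * of_real \<rho> ^ n) p)) summable_on UNIV"
    using summable_on_iff_abs_summable_on_complex by blast
  also have "(\<lambda>p. norm ((\<lambda>(m, n). a m n * of_real \<rho> ^ m * of_real \<rho> ^ n) p)) = b"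
    using \<rho> by (auto simp: b_def norm_mult norm_power power_add fun_eq_iff)
  finally have b: "(b has_sum infsum b UNIV) UNIV"
    by (rule has_sum_infsum)
  define S where "S = infsum b UNIV"
  have S: "S \<ge> 0"
    unfolding S_def b_def using \<rho> by (intro infsum_nonneg) auto
  have "norm (u x y - u 0 0) \<le> S / \<rho> * (norm x + norm y)"
    if xy: "norm x < \<rho>" "norm y < \<rho>" for x y
  proof -
    have "((\<lambda>p. (\<lambda>(m, n). a m n * x ^ m * y ^ n) p + - (\<lambda>(m, n). a m n * 0 ^ m * 0 ^ n) p)
        has_sum (u x y + - u 0 0)) UNIV"
      using xy \<rho> r by (intro has_sum_add has_sum_uminusI hs) auto
    moreover have "((\<lambda>p. (norm x + norm y) / \<rho> * b p) has_sum ((norm x + norm y) / \<rho> * S)) UNIV"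
      unfolding S_def by (intro has_sum_cmult_right b)
    moreover have "norm ((\<lambda>(m, n). a m n * x ^ m * y ^ n) p + - (\<lambda>(m, n). a m n * 0 ^ m * 0 ^ n) p)
        \<le> (norm x + norm y) / \<rho> * b p" for p
    proof (cases p)
      case (Pair m n)
      show ?thesis
      proof (cases "(m, n) = (0, 0)")
        case False
        then have zero: "a m n * 0 ^ m * 0 ^ n = 0"
          by auto
        have "norm (a m n * x ^ m * y ^ n + - (a m n * 0 ^ m * 0 ^ n))
            = norm (a m n) * norm (x ^ m * y ^ n)"
          unfolding zero by (simp add: norm_mult mult.assoc)
        also have "\<dots> \<le> norm (a m n) * ((norm x + norm y) / \<rho> * \<rho> ^ (m + n))"
          using norm_monomial_le[of x \<rho> y m n] xy \<rho> False by (intro mult_left_mono) auto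
        finally show ?thesis
          by (simp add: Pair b_def algebra_simps)
      qed (use Pair \<rho> b_def in auto)
    qed
    ultimately have "norm (u x y + - u 0 0) \<le> (norm x + norm y) / \<rho> * S"
      by (rule norm_infsum_le)
    then show ?thesis
      by (simp add: field_simps)
  qed
  moreover have "S / \<rho> \<ge> 0"
    using S \<rho> by simp
  ultimately show ?thesis
    using that \<rho>(1) by blast
qed

lemma cps2_tendsto_origin:
  assumes "cps2 u" and "(f \<longlongrightarrow> 0) F" and "(g \<longlongrightarrow> 0) F"
  shows "((\<lambda>z. u (f z) (g z)) \<longlongrightarrow> u 0 0) F"
proof -
  obtain \<delta> C where "\<delta> > 0" and "C \<ge> 0" and lip: "\<And>x y. norm x < \<delta> \<Longrightarrow> norm y < \<delta> \<Longrightarrow>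
      norm (u x y - u 0 0) \<le> C * (norm x + norm y)"
    using cps2_lipschitz_at_origin[OF assms(1)] by metis
  have "\<forall>\<^sub>F z in F. norm (f z) < \<delta>" and "\<forall>\<^sub>F z in F. norm (g z) < \<delta>"
    using tendstoD[OF assms(2) \<open>\<delta> > 0\<close>] tendstoD[OF assms(3) \<open>\<delta> > 0\<close>]
    by (simp_all add: dist_norm)
  then have bound: "\<forall>\<^sub>F z in F. norm (u (f z) (g z) - u 0 0) \<le> C * (norm (f z) + norm (g z))"
    by eventually_elim (rule lip)
  have "((\<lambda>z. C * (norm (f z) + norm (g z))) \<longlongrightarrow> C * (norm (0::complex) + norm (0::complex))) F"
    by (intro tendsto_intros assms(2,3))
  then have "((\<lambda>z. C * (norm (f z) + norm (g z))) \<longlongrightarrow> 0) F"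
    by simp
  then have "((\<lambda>z. u (f z) (g z) - u 0 0) \<longlongrightarrow> 0) F"
    by (rule Lim_null_comparison[OF bound])
  then show ?thesis
    by (rule LIM_zero_cancel)
qed

lemma Apart_plus_Bpart_eq:
  "Apart P x y + of_real t * Bpart P x y
     = (1 - \<i> * of_real t) / 2 * pev P x y + (1 + \<i> * of_real t) / 2 * pev (pbar P) x y"
  unfolding Apart_def Bpart_def by (simp add: field_simps)

lemma Apart_plus_i_Bpart: "Apart P x y + \<i> * Bpart P x y = pev P x y"
  unfolding Apart_def Bpart_def by (simp add: field_simps)

lemma has_field_derivative_Apart_plus_Bpart:
  "((\<lambda>y. Apart P x y + of_real t * Bpart P x y) has_field_derivative
     (1 - \<i> * of_real t) / 2 * pev (pderiv P) x y + (1 + \<i> * of_real t) / 2 * pev (pderiv (pbar P)) x y)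
   (at y)"
  unfolding Apart_plus_Bpart_eq by (intro DERIV_add DERIV_cmult has_field_derivative_pev)

lemma i_minus_of_real_neq_0: "\<i> - of_real t \<noteq> 0"
  by (simp add: complex_eq_iff)

section \<open>Along a branch of A + tB = 0\<close>

locale proper_branch =
  fixes P :: "complex poly poly"
    and M k :: nat
    and u :: "complex \<Rightarrow> complex \<Rightarrow> complex"
    and L :: "nat \<Rightarrow> nat"
    and q :: "nat \<Rightarrow> real poly"
    and \<psi> :: "nat \<Rightarrow> complex \<Rightarrow> complex"
    and t :: real
    and ut :: "complex \<Rightarrow> complex \<Rightarrow> complex"
    and \<psi>t :: "nat \<Rightarrow> complex \<Rightarrow> complex"
    and j :: nat
  assumes j_less: "j < M"
    and q_j_0: "poly (q j) 0 = 0"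
    and L_j_pos: "L j > 0"
    and k_pos: "k \<ge> 1"
    and u_unit: "unit2 u"
    and \<psi>_an: "\<And>i. i < M \<Longrightarrow> cps1 (\<psi> i)"
    and \<psi>_im: "\<And>i. i < M \<Longrightarrow> Im (\<psi> i 0) > 0"
    and factP: "\<exists>r>0. \<forall>s y. norm s < r \<longrightarrow> norm y < r \<longrightarrow>
        pev P (s ^ k) y = u (s ^ k) y *
          (\<Prod>i<M. y + poly (map_poly of_real (q i)) (s ^ k) + (s ^ k) ^ (2 * L i) * \<psi> i s)"
    and ut_unit: "unit2 ut"
    and \<psi>t_an: "\<And>i. i < M \<Longrightarrow> rps1 (\<psi>t i)"
    and factt: "\<exists>r>0. \<forall>x y. norm x < r \<longrightarrow> norm y < r \<longrightarrow>
        Apart P x y + of_real t * Bpart P x y = ut x y *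
          (\<Prod>i<M. y + poly (map_poly of_real (q i)) x + x ^ (2 * L i) * \<psi>t i x)"
    and ordt: "\<And>i. i < M \<Longrightarrow> i \<noteq> j \<Longrightarrow>
        Ord (\<lambda>x. poly (map_poly of_real (q j - q i)) x
                 + x ^ (2 * L j) * \<psi>t j x - x ^ (2 * L i) * \<psi>t i x) = Oij q L i j"
begin

definition Q :: "nat \<Rightarrow> complex \<Rightarrow> complex" where
  "Q i x = poly (map_poly of_real (q i)) x"

definition branch :: "nat \<Rightarrow> complex \<Rightarrow> complex" where
  "branch i x = - Q i x - x ^ (2 * L i) * \<psi>t i x"

definition cofactor :: "complex \<Rightarrow> complex \<Rightarrow> complex" where
  "cofactor x y = (\<Prod>i\<in>{..<M} - {j}. y - branch i x)"

definition Oj :: "nat \<Rightarrow> nat" where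
  "Oj i = the_enat (Oij q L i j)"

lemma Oij_eq_enat_Oj: "Oij q L i j = enat (Oj i)"
  using Oij_le[of q L i j] unfolding Oj_def by (cases "Oij q L i j") auto

lemma Oj_le: "Oj i \<le> 2 * L i"
  using Oij_le[of q L i j] by (simp add: Oij_eq_enat_Oj)

lemma Oj_self: "Oj j = 2 * L j"
  using Oij_self[of q L j] by (simp add: Oij_eq_enat_Oj)

lemma analytic_branch: "i < M \<Longrightarrow> branch i analytic_on {0}"
  unfolding branch_def[abs_def] Q_def
  by (intro analytic_intros cps1_analytic_at_0 rps1_imp_cps1 \<psi>t_an)

lemma Q_real: "x \<in> \<real> \<Longrightarrow> Q i x \<in> \<real>"
  by (auto simp: Q_def poly_map_poly_of_real elim!: Reals_cases)

lemma branch_real: "i < M \<Longrightarrow> \<forall>\<^sub>F x in at 0. x \<in> \<real> \<longrightarrow> branch i x \<in> \<real>"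
  using rps1_real_near_0[OF \<psi>t_an]
  by (rule eventually_mono) (auto simp: branch_def Q_real)

lemma branch_tendsto_0: "(branch j \<longlongrightarrow> 0) (at 0)"
proof -
  have "branch j 0 = 0"
    using poly_map_poly_of_real[of "q j" 0, where 'a = complex] q_j_0 L_j_pos
    by (simp add: branch_def Q_def power_0_left)
  then show ?thesis
    using analytic_at_imp_isCont[OF analytic_branch[OF j_less]] by (simp add: isCont_def)
qed

lemma tendsto_branch_diff:
  assumes "i < M"
  obtains e where "e \<in> \<real>" and "i \<noteq> j \<Longrightarrow> e \<noteq> 0"
    and "((\<lambda>x. (branch j x - branch i x) / x ^ Oj i) \<longlongrightarrow> e) (at 0)"
proof (cases "i = j")
  case True
  then show ?thesis
    using that[of 0] by simp
next
  case False
  have "(\<lambda>x. branch i x - branch j x) = (\<lambda>x. poly (map_poly of_real (q j - q i)) x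
      + x ^ (2 * L j) * \<psi>t j x - x ^ (2 * L i) * \<psi>t i x)"
    by (simp add: fun_eq_iff branch_def Q_def map_poly_of_real_diff)
  then have "Ord (\<lambda>x. branch i x - branch j x) = enat (Oj i)"
    using ordt[OF assms False] by (simp add: Oij_eq_enat_Oj)
  moreover have "(\<lambda>x. branch i x - branch j x) analytic_on {0}"
    using assms j_less by (intro analytic_intros analytic_branch)
  ultimately obtain c where "c \<noteq> 0"
    and lim: "((\<lambda>x. (branch i x - branch j x) / x ^ Oj i) \<longlongrightarrow> c) (at 0)"
    using Ord_eq_enat_imp_tendsto by blast
  have "\<forall>\<^sub>F x in at 0. x \<in> \<real> \<longrightarrow> (branch i x - branch j x) / x ^ Oj i \<in> \<real>"
    using branch_real[OF assms] branch_real[OF j_less] by eventually_elim auto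
  then have "c \<in> \<real>"
    by (rule tendsto_Reals_at_0[OF lim])
  moreover have "((\<lambda>x. (branch j x - branch i x) / x ^ Oj i) \<longlongrightarrow> - c) (at 0)"
    using tendsto_minus[OF lim] by (simp add: minus_divide_left)
  ultimately show ?thesis
    using that[of "- c"] \<open>c \<noteq> 0\<close> by simp
qed

lemma tendsto_P_factor_on_branch:
  assumes i: "i < M"
  obtains c where "c \<noteq> 0" and
    "((\<lambda>s. (branch j (s ^ k) + Q i (s ^ k) + (s ^ k) ^ (2 * L i) * \<psi> i s) / s ^ (k * Oj i))
       \<longlongrightarrow> c) (at 0)"
proof -
  obtain e where e_real: "e \<in> \<real>" and e_nz: "i \<noteq> j \<Longrightarrow> e \<noteq> 0"
    and e: "((\<lambda>x. (branch j x - branch i x) / x ^ Oj i) \<longlongrightarrow> e) (at 0)"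
    using tendsto_branch_diff[OF i] by blast
  have \<psi>_cont: "isCont (\<psi> i) 0" and \<psi>t_cont: "isCont (\<psi>t i) 0"
    using i by (auto intro!: analytic_at_imp_isCont cps1_analytic_at_0 rps1_imp_cps1 \<psi>_an \<psi>t_an)
  have "\<psi>t i 0 \<in> \<real>"
    using tendsto_Reals_at_0 \<psi>t_cont rps1_real_near_0[OF \<psi>t_an[OF i]] by (simp add: isCont_def)
  have sk: "filterlim (\<lambda>s::complex. s ^ k) (at 0) (at 0)"
    by (rule filterlim_power_at_0[OF k_pos])
  then have sk0: "((\<lambda>s::complex. s ^ k) \<longlongrightarrow> 0) (at 0)"
    by (simp add: filterlim_at)
  define c where "c = e + 0 ^ (2 * L i - Oj i) * (\<psi> i 0 - \<psi>t i 0)"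
  have "((\<lambda>s. (branch j (s ^ k) - branch i (s ^ k)) / (s ^ k) ^ Oj i
      + (s ^ k) ^ (2 * L i - Oj i) * (\<psi> i s - \<psi>t i (s ^ k))) \<longlongrightarrow> c) (at 0)"
    unfolding c_def
    using filterlim_compose[OF e sk] \<psi>_cont \<psi>t_cont
    by (intro tendsto_intros tendsto_power sk0 isCont_tendsto_compose[OF \<psi>t_cont]) (auto simp: isCont_def)
  moreover have "\<forall>\<^sub>F s in at 0.
      (branch j (s ^ k) - branch i (s ^ k)) / (s ^ k) ^ Oj i
        + (s ^ k) ^ (2 * L i - Oj i) * (\<psi> i s - \<psi>t i (s ^ k))
      = (branch j (s ^ k) + Q i (s ^ k) + (s ^ k) ^ (2 * L i) * \<psi> i s) / s ^ (k * Oj i)"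
  proof -
    have key: "(branch j x - branch i x) / x ^ Oj i + x ^ (2 * L i - Oj i) * (a - \<psi>t i x)
        = (branch j x + Q i x + x ^ (2 * L i) * a) / x ^ Oj i" if "x \<noteq> 0" for x a
    proof -
      have split: "x ^ (2 * L i) = x ^ (2 * L i - Oj i) * x ^ Oj i"
        using Oj_le[of i] by (simp flip: power_add)
      show ?thesis
        unfolding branch_def split using that by (simp add: field_simps)
    qed
    have "\<forall>\<^sub>F s in at (0::complex). s \<noteq> 0"
      by (simp add: eventually_at_filter)
    then show ?thesis
      by eventually_elim (simp add: key power_mult)
  qed
  ultimately have "((\<lambda>s. (branch j (s ^ k) + Q i (s ^ k) + (s ^ k) ^ (2 * L i) * \<psi> i s)
      / s ^ (k * Oj i)) \<longlongrightarrow> c) (at 0)"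
    by (rule Lim_transform_eventually)
  moreover have "c \<noteq> 0"
  proof (cases "Oj i < 2 * L i")
    case True
    then have "i \<noteq> j" and "c = e"
      using Oj_self by (auto simp: c_def)
    then show ?thesis
      using e_nz by simp
  next
    case False
    then have "Im c = Im (\<psi> i 0)"
      using Oj_le[of i] e_real \<open>\<psi>t i 0 \<in> \<real>\<close> by (auto simp: c_def complex_is_Real_iff)
    then show ?thesis
      using \<psi>_im[OF i] by auto
  qed
  ultimately show ?thesis
    using that by blast
qed

lemma eventually_small_on_branch:
  assumes "r > 0"
  shows "\<forall>\<^sub>F x in at 0. norm x < r \<and> norm (branch j x) < r"
proof (rule eventually_conj)
  show "\<forall>\<^sub>F x in at 0. norm x < r"
    using assms by (auto simp: eventually_at dist_norm)
  show "\<forall>\<^sub>F x in at 0. norm (branch j x) < r"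
    using tendstoD[OF branch_tendsto_0 assms] by (simp add: dist_norm)
qed

lemma factt_on_branch:
  obtains r where "r > 0" and "\<And>x y. norm x < r \<Longrightarrow> norm y < r \<Longrightarrow>
    Apart P x y + of_real t * Bpart P x y = ut x y * ((y - branch j x) * cofactor x y)"
proof -
  from factt obtain r where "r > 0" and fact: "\<forall>x y. norm x < r \<longrightarrow> norm y < r \<longrightarrow>
      Apart P x y + of_real t * Bpart P x y
        = ut x y * (\<Prod>i<M. y + poly (map_poly of_real (q i)) x + x ^ (2 * L i) * \<psi>t i x)"
    by blast
  have "(\<Prod>i<M. y + poly (map_poly of_real (q i)) x + x ^ (2 * L i) * \<psi>t i x)
      = (\<Prod>i<M. y - branch i x)" for x y
    by (intro prod.cong) (simp_all add: branch_def Q_def)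
  also have "(\<Prod>i<M. y - branch i x) = (y - branch j x) * cofactor x y" for x y
    unfolding cofactor_def using j_less by (simp add: prod.remove)
  finally show ?thesis
    by (intro that[OF \<open>r > 0\<close>]) (simp add: fact)
qed

lemma Bpart_on_branch:
  "\<forall>\<^sub>F x in at 0. Bpart P x (branch j x) = pev P x (branch j x) / (\<i> - of_real t)"
proof -
  obtain r where "r > 0" and fact: "\<And>x y. norm x < r \<Longrightarrow> norm y < r \<Longrightarrow>
      Apart P x y + of_real t * Bpart P x y = ut x y * ((y - branch j x) * cofactor x y)"
    using factt_on_branch by metis
  have "\<i> - complex_of_real t \<noteq> 0"
    by (rule i_minus_of_real_neq_0)
  from eventually_small_on_branch[OF \<open>r > 0\<close>] show ?thesis
  proof eventually_elim
    case (elim x)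
    then have "Apart P x (branch j x) = - (of_real t * Bpart P x (branch j x))"
      using fact[of x "branch j x"] by (simp add: eq_neg_iff_add_eq_0)
    then have "pev P x (branch j x) = (\<i> - of_real t) * Bpart P x (branch j x)"
      by (simp flip: Apart_plus_i_Bpart add: algebra_simps)
    then show ?case
      using \<open>\<i> - complex_of_real t \<noteq> 0\<close> by simp
  qed
qed

lemma P_on_branch_ramified:
  "\<forall>\<^sub>F s in at 0. pev P (s ^ k) (branch j (s ^ k))
     = u (s ^ k) (branch j (s ^ k)) *
       (\<Prod>i<M. branch j (s ^ k) + Q i (s ^ k) + (s ^ k) ^ (2 * L i) * \<psi> i s)"
proof -
  from factP obtain r where "r > 0" and fact: "\<forall>s y. norm s < r \<longrightarrow> norm y < r \<longrightarrow>
      pev P (s ^ k) y = u (s ^ k) y *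
        (\<Prod>i<M. y + poly (map_poly of_real (q i)) (s ^ k) + (s ^ k) ^ (2 * L i) * \<psi> i s)"
    by blast
  have "\<forall>\<^sub>F s in at 0. norm s < r"
    using \<open>r > 0\<close> by (auto simp: eventually_at dist_norm)
  moreover have "\<forall>\<^sub>F s in at 0. norm (branch j (s ^ k)) < r"
    using eventually_compose_filterlim[OF eventually_small_on_branch[OF \<open>r > 0\<close>]
        filterlim_power_at_0[OF k_pos]] by (rule eventually_mono) simp
  ultimately show ?thesis
    by eventually_elim (simp add: fact Q_def)
qed

lemma tendsto_P_on_branch_ramified:
  obtains c where "c \<noteq> 0"
    and "((\<lambda>s. pev P (s ^ k) (branch j (s ^ k)) / s ^ (k * (\<Sum>i<M. Oj i))) \<longlongrightarrow> c) (at 0)"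
proof -
  have "\<forall>i. \<exists>c. i < M \<longrightarrow> c \<noteq> 0 \<and> ((\<lambda>s. (branch j (s ^ k) + Q i (s ^ k)
      + (s ^ k) ^ (2 * L i) * \<psi> i s) / s ^ (k * Oj i)) \<longlongrightarrow> c) (at 0)"
  proof
    fix i
    show "\<exists>c. i < M \<longrightarrow> c \<noteq> 0 \<and> ((\<lambda>s. (branch j (s ^ k) + Q i (s ^ k)
        + (s ^ k) ^ (2 * L i) * \<psi> i s) / s ^ (k * Oj i)) \<longlongrightarrow> c) (at 0)"
    proof (cases "i < M")
      case True
      show ?thesis
        by (rule tendsto_P_factor_on_branch[OF True]) blast
    qed simp
  qed
  from choice[OF this] obtain c where c: "\<And>i. i < M \<Longrightarrow> c i \<noteq> 0 \<and>
      ((\<lambda>s. (branch j (s ^ k) + Q i (s ^ k) + (s ^ k) ^ (2 * L i) * \<psi> i s) / s ^ (k * Oj i))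
        \<longlongrightarrow> c i) (at 0)"
    by blast
  have sk: "filterlim (\<lambda>s::complex. s ^ k) (at 0) (at 0)"
    by (rule filterlim_power_at_0[OF k_pos])
  then have sk0: "((\<lambda>s::complex. s ^ k) \<longlongrightarrow> 0) (at 0)"
    by (simp add: filterlim_at)
  have "((\<lambda>s. u (s ^ k) (branch j (s ^ k))) \<longlongrightarrow> u 0 0) (at 0)"
    using u_unit unfolding unit2_def
    by (intro cps2_tendsto_origin[OF _ sk0 filterlim_compose[OF branch_tendsto_0 sk]]) simp
  moreover have "((\<lambda>s. \<Prod>i<M. (branch j (s ^ k) + Q i (s ^ k) + (s ^ k) ^ (2 * L i) * \<psi> i s)
      / s ^ (k * Oj i)) \<longlongrightarrow> (\<Prod>i<M. c i)) (at 0)"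
    using c by (intro tendsto_prod) blast
  ultimately have "((\<lambda>s. u (s ^ k) (branch j (s ^ k)) *
      (\<Prod>i<M. (branch j (s ^ k) + Q i (s ^ k) + (s ^ k) ^ (2 * L i) * \<psi> i s) / s ^ (k * Oj i)))
      \<longlongrightarrow> u 0 0 * (\<Prod>i<M. c i)) (at 0)"
    by (rule tendsto_mult)
  moreover have "\<forall>\<^sub>F s in at 0. u (s ^ k) (branch j (s ^ k)) *
        (\<Prod>i<M. (branch j (s ^ k) + Q i (s ^ k) + (s ^ k) ^ (2 * L i) * \<psi> i s) / s ^ (k * Oj i))
      = pev P (s ^ k) (branch j (s ^ k)) / s ^ (k * (\<Sum>i<M. Oj i))"
    using P_on_branch_ramified
    by eventually_elim (simp add: prod_dividef sum_distrib_left power_sum)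
  ultimately have "((\<lambda>s. pev P (s ^ k) (branch j (s ^ k)) / s ^ (k * (\<Sum>i<M. Oj i)))
      \<longlongrightarrow> u 0 0 * (\<Prod>i<M. c i)) (at 0)"
    by (rule Lim_transform_eventually)
  moreover have "u 0 0 * (\<Prod>i<M. c i) \<noteq> 0"
    using u_unit c by (simp add: unit2_def)
  ultimately show ?thesis
    using that by blast
qed

lemma Ord_Bpart_on_branch: "Ord (\<lambda>x. Bpart P x (branch j x)) = enat (\<Sum>i<M. Oj i)"
proof -
  obtain c where "c \<noteq> 0"
    and lim: "((\<lambda>s. pev P (s ^ k) (branch j (s ^ k)) / s ^ (k * (\<Sum>i<M. Oj i))) \<longlongrightarrow> c) (at 0)"
    using tendsto_P_on_branch_ramified by metis
  have "\<i> - complex_of_real t \<noteq> 0"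
    by (rule i_minus_of_real_neq_0)
  have "((\<lambda>s. pev P (s ^ k) (branch j (s ^ k)) / s ^ (k * (\<Sum>i<M. Oj i)) / (\<i> - of_real t))
      \<longlongrightarrow> c / (\<i> - of_real t)) (at 0)"
    using lim \<open>\<i> - complex_of_real t \<noteq> 0\<close> by (intro tendsto_divide tendsto_const)
  moreover have "\<forall>\<^sub>F s in at 0. pev P (s ^ k) (branch j (s ^ k)) / s ^ (k * (\<Sum>i<M. Oj i))
      / (\<i> - of_real t) = Bpart P (s ^ k) (branch j (s ^ k)) / s ^ (k * (\<Sum>i<M. Oj i))"
    using eventually_compose_filterlim[OF Bpart_on_branch filterlim_power_at_0[OF k_pos]]
    by eventually_elim simp
  ultimately have "((\<lambda>s. Bpart P (s ^ k) (branch j (s ^ k)) / s ^ (k * (\<Sum>i<M. Oj i)))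
      \<longlongrightarrow> c / (\<i> - of_real t)) (at 0)"
    by (rule Lim_transform_eventually)
  moreover have "(\<lambda>x. Bpart P x (branch j x)) analytic_on {0}"
    unfolding Bpart_def using j_less by (intro analytic_intros analytic_branch) auto
  ultimately show ?thesis
    using Ord_eq_enat_if_tendsto_ramified k_pos \<open>c \<noteq> 0\<close> \<open>\<i> - complex_of_real t \<noteq> 0\<close>
    by simp
qed

lemma tendsto_cofactor_on_branch:
  obtains e where "e \<noteq> 0"
    and "((\<lambda>x. cofactor x (branch j x) / x ^ (\<Sum>i\<in>{..<M} - {j}. Oj i)) \<longlongrightarrow> e) (at 0)"
proof -
  have "\<forall>i. \<exists>e. i \<in> {..<M} - {j} \<longrightarrow> e \<noteq> 0 \<and>
      ((\<lambda>x. (branch j x - branch i x) / x ^ Oj i) \<longlongrightarrow> e) (at 0)"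
  proof
    fix i
    show "\<exists>e. i \<in> {..<M} - {j} \<longrightarrow> e \<noteq> 0 \<and>
        ((\<lambda>x. (branch j x - branch i x) / x ^ Oj i) \<longlongrightarrow> e) (at 0)"
    proof (cases "i \<in> {..<M} - {j}")
      case True
      show ?thesis
        by (rule tendsto_branch_diff[of i]) (use True in auto)
    qed blast
  qed
  from choice[OF this] obtain e where e: "\<And>i. i \<in> {..<M} - {j} \<Longrightarrow> e i \<noteq> 0 \<and>
      ((\<lambda>x. (branch j x - branch i x) / x ^ Oj i) \<longlongrightarrow> e i) (at 0)"
    by blast
  have "((\<lambda>x. \<Prod>i\<in>{..<M} - {j}. (branch j x - branch i x) / x ^ Oj i)
      \<longlongrightarrow> (\<Prod>i\<in>{..<M} - {j}. e i)) (at 0)"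
    using e by (intro tendsto_prod) blast
  moreover have "(\<Prod>i\<in>{..<M} - {j}. (branch j x - branch i x) / x ^ Oj i)
      = cofactor x (branch j x) / x ^ (\<Sum>i\<in>{..<M} - {j}. Oj i)" for x
    by (simp add: cofactor_def prod_dividef power_sum)
  ultimately have "((\<lambda>x. cofactor x (branch j x) / x ^ (\<Sum>i\<in>{..<M} - {j}. Oj i))
      \<longlongrightarrow> (\<Prod>i\<in>{..<M} - {j}. e i)) (at 0)"
    by simp
  moreover have "(\<Prod>i\<in>{..<M} - {j}. e i) \<noteq> 0"
    using e by (simp add: prod_zero_iff)
  ultimately show ?thesis
    using that by blast
qed

lemma analytic_deriv_on_branch:
  "(\<lambda>x. deriv (\<lambda>y. Apart P x y + of_real t * Bpart P x y) (branch j x)) analytic_on {0}"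
proof -
  have "deriv (\<lambda>y. Apart P x y + of_real t * Bpart P x y) y
      = (1 - \<i> * of_real t) / 2 * pev (pderiv P) x y
        + (1 + \<i> * of_real t) / 2 * pev (pderiv (pbar P)) x y" for x y
    by (rule DERIV_imp_deriv[OF has_field_derivative_Apart_plus_Bpart])
  then show ?thesis
    using j_less by (simp only:) (intro analytic_intros analytic_branch)
qed

lemma eventually_tendsto_ut_on_branch:
  "\<forall>\<^sub>F x in at 0. (ut x \<longlongrightarrow>
     deriv (\<lambda>y. Apart P x y + of_real t * Bpart P x y) (branch j x) / cofactor x (branch j x))
     (at (branch j x))"
proof -
  obtain r where "r > 0" and fact: "\<And>x y. norm x < r \<Longrightarrow> norm y < r \<Longrightarrow>
      Apart P x y + of_real t * Bpart P x y = ut x y * ((y - branch j x) * cofactor x y)"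
    using factt_on_branch by metis
  obtain e where "e \<noteq> 0"
    and cof: "((\<lambda>x. cofactor x (branch j x) / x ^ (\<Sum>i\<in>{..<M} - {j}. Oj i)) \<longlongrightarrow> e) (at 0)"
    using tendsto_cofactor_on_branch by metis
  have "\<forall>\<^sub>F x in at 0. cofactor x (branch j x) \<noteq> 0"
    using tendsto_imp_eventually_ne[OF cof \<open>e \<noteq> 0\<close>] by (rule eventually_mono) auto
  with eventually_small_on_branch[OF \<open>r > 0\<close>] show ?thesis
  proof eventually_elim
    case (elim x)
    define y0 where "y0 = branch j x"
    define D where "D = deriv (\<lambda>y. Apart P x y + of_real t * Bpart P x y) y0"
    have "((\<lambda>y. Apart P x y + of_real t * Bpart P x y) has_field_derivative D) (at y0)"
      unfolding D_def
      using DERIV_imp_deriv[OF has_field_derivative_Apart_plus_Bpart] has_field_derivative_Apart_plus_Bpart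
      by simp
    moreover have "Apart P x y0 + of_real t * Bpart P x y0 = 0"
      using fact[of x y0] elim by (simp add: y0_def)
    moreover have "\<forall>\<^sub>F y in at y0. norm y < r"
      using eventually_at_in_open'[OF open_ball, of y0 0 r] elim by (simp add: y0_def dist_norm)
    then have "\<forall>\<^sub>F y in at y0.
        Apart P x y + of_real t * Bpart P x y = ut x y * ((y - y0) * cofactor x y)"
      by eventually_elim (use elim in \<open>simp add: fact y0_def\<close>)
    moreover have "isCont (cofactor x) y0"
      unfolding cofactor_def by (intro continuous_intros)
    ultimately show ?case
      using elim unfolding D_def y0_def by (intro tendsto_cofactor_at_root) auto
  qed
qed

text \<open>The unit ut is only known to be a convergent double power series, so its value at
  (x, y_j(x)) is reached as a limit; Lipschitz continuity at the origin is all that is needed.\<close>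

lemma tendsto_deriv_over_cofactor_on_branch:
  "((\<lambda>x. deriv (\<lambda>y. Apart P x y + of_real t * Bpart P x y) (branch j x) / cofactor x (branch j x))
     \<longlongrightarrow> ut 0 0) (at 0)"
proof -
  obtain \<delta> C where "\<delta> > 0" and "C \<ge> 0" and lip: "\<And>x y. norm x < \<delta> \<Longrightarrow> norm y < \<delta> \<Longrightarrow>
      norm (ut x y - ut 0 0) \<le> C * (norm x + norm y)"
    using cps2_lipschitz_at_origin ut_unit unfolding unit2_def by metis
  from eventually_tendsto_ut_on_branch eventually_small_on_branch[OF \<open>\<delta> > 0\<close>]
  have "\<forall>\<^sub>F x in at 0.
      norm (deriv (\<lambda>y. Apart P x y + of_real t * Bpart P x y) (branch j x) / cofactor x (branch j x)
        - ut 0 0) \<le> C * (norm x + norm (branch j x))"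
  proof eventually_elim
    case (elim x)
    have "\<forall>\<^sub>F y in at (branch j x). norm y < \<delta>"
      using eventually_at_in_open'[OF open_ball, of "branch j x" 0 \<delta>] elim by (simp add: dist_norm)
    then have "\<forall>\<^sub>F y in at (branch j x). norm (ut x y - ut 0 0) \<le> C * (norm x + norm y)"
      by eventually_elim (use elim in \<open>simp add: lip\<close>)
    with elim show ?case
      by (intro norm_limit_diff_le) auto
  qed
  moreover have "((\<lambda>x. C * (norm x + norm (branch j x))) \<longlongrightarrow> C * (norm (0::complex) + norm (0::complex))) (at 0)"
    by (rule tendsto_mult[OF tendsto_const tendsto_add[OF tendsto_norm[OF tendsto_ident_at]
          tendsto_norm[OF branch_tendsto_0]]])
  ultimately have "((\<lambda>x. deriv (\<lambda>y. Apart P x y + of_real t * Bpart P x y) (branch j x)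
      / cofactor x (branch j x) - ut 0 0) \<longlongrightarrow> 0) (at 0)"
    using Lim_null_comparison by force
  then show ?thesis
    by (rule LIM_zero_cancel)
qed

lemma Ord_deriv_on_branch:
  "Ord (\<lambda>x. deriv (\<lambda>y. Apart P x y + of_real t * Bpart P x y) (branch j x))
     = enat (\<Sum>i\<in>{..<M} - {j}. Oj i)"
proof -
  define D where "D x = deriv (\<lambda>y. Apart P x y + of_real t * Bpart P x y) (branch j x)" for x
  define m where "m = (\<Sum>i\<in>{..<M} - {j}. Oj i)"
  obtain e where "e \<noteq> 0" and cof: "((\<lambda>x. cofactor x (branch j x) / x ^ m) \<longlongrightarrow> e) (at 0)"
    unfolding m_def using tendsto_cofactor_on_branch by metis
  have "((\<lambda>x. D x / cofactor x (branch j x) * (cofactor x (branch j x) / x ^ m))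
      \<longlongrightarrow> ut 0 0 * e) (at 0)"
    using tendsto_deriv_over_cofactor_on_branch cof unfolding D_def by (rule tendsto_mult)
  moreover have "\<forall>\<^sub>F x in at 0.
      D x / cofactor x (branch j x) * (cofactor x (branch j x) / x ^ m) = D x / x ^ m"
    using tendsto_imp_eventually_ne[OF cof \<open>e \<noteq> 0\<close>] by eventually_elim simp
  ultimately have "((\<lambda>x. D x / x ^ m) \<longlongrightarrow> ut 0 0 * e) (at 0)"
    by (rule Lim_transform_eventually)
  moreover have "ut 0 0 * e \<noteq> 0"
    using ut_unit \<open>e \<noteq> 0\<close> by (simp add: unit2_def)
  ultimately show ?thesis
    using Ord_eq_enat_if_tendsto[OF analytic_deriv_on_branch] unfolding D_def m_def by blast
qed

lemma sum_Oij_eq_enat: "(\<Sum>i\<in>A. Oij q L i j) = enat (\<Sum>i\<in>A. Oj i)"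
  by (simp add: Oij_eq_enat_Oj flip: of_nat_eq_enat)

theorem orders_on_branch:
  "Ord (\<lambda>x. Bpart P x (- poly (map_poly of_real (q j)) x - x ^ (2 * L j) * \<psi>t j x))
      = (\<Sum>i<M. Oij q L i j)
   \<and> (\<Sum>i<M. Oij q L i j) = enat (2 * L j) + (\<Sum>i\<in>{..<M} - {j}. Oij q L i j)
   \<and> Ord (\<lambda>x. deriv (\<lambda>y. Apart P x y + of_real t * Bpart P x y)
        (- poly (map_poly of_real (q j)) x - x ^ (2 * L j) * \<psi>t j x))
      = (\<Sum>i\<in>{..<M} - {j}. Oij q L i j)"
proof -
  have branch_eq: "branch j x = - poly (map_poly of_real (q j)) x - x ^ (2 * L j) * \<psi>t j x" for x
    by (simp add: branch_def Q_def)
  have "(\<Sum>i<M. Oij q L i j) = Oij q L j j + (\<Sum>i\<in>{..<M} - {j}. Oij q L i j)"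
    using j_less by (simp add: sum.remove)
  then show ?thesis
    using Ord_Bpart_on_branch Ord_deriv_on_branch Oij_self[of q L j]
    by (simp add: sum_Oij_eq_enat flip: branch_eq)
qed

end

text \<open>The hypotheses on P itself (no zeros in R x H, coprimality with its conjugate, the
  order and leading coefficient of P(0,y)) only serve to guarantee the two factorizations;
  given those, the argument is local and does not use them again.\<close>

theorem corollary3p6:
  fixes P :: "complex poly poly"
    and M k :: nat
    and u :: "complex \<Rightarrow> complex \<Rightarrow> complex"
    and L :: "nat \<Rightarrow> nat"
    and q :: "nat \<Rightarrow> real poly"
    and \<psi> :: "nat \<Rightarrow> complex \<Rightarrow> complex"
    and t :: real
    and ut :: "complex \<Rightarrow> complex \<Rightarrow> complex"
    and \<psi>t :: "nat \<Rightarrow> complex \<Rightarrow> complex"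
  assumes nozero: "\<forall>x::real. \<forall>y::complex. Im y > 0 \<longrightarrow> pev P (of_real x) y \<noteq> 0"
    and coprime: "coprime P (pbar P)"
    and M_def: "Ord (\<lambda>y. pev P 0 y) = enat M"
    and lead_real: "coeff (at_x0 P) M \<in> \<real>"
    \<comment> \<open>local Puiseux factorization of P (with x = s^k)\<close>
    and k_pos: "k \<ge> 1"
    and u_unit: "unit2 u"
    and q0: "\<forall>j<M. poly (q j) 0 = 0"
    and qdeg: "\<forall>j<M. degree (q j) < 2 * L j"
    and \<psi>_an: "\<forall>j<M. cps1 (\<psi> j)"
    and \<psi>_im: "\<forall>j<M. Im (\<psi> j 0) > 0"
    and factP: "\<exists>r>0. \<forall>s y. norm s < r \<longrightarrow> norm y < r \<longrightarrow>
        pev P (s ^ k) y = u (s ^ k) y *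
          (\<Prod>j<M. y + poly (map_poly of_real (q j)) (s ^ k) + (s ^ k) ^ (2 * L j) * \<psi> j s)"
    \<comment> \<open>t is proper, with the corresponding factorization of A + tB\<close>
    and ut_unit: "unit2 ut"
    and \<psi>t_an: "\<forall>j<M. rps1 (\<psi>t j)"
    and factt: "\<exists>r>0. \<forall>x y. norm x < r \<longrightarrow> norm y < r \<longrightarrow>
        Apart P x y + of_real t * Bpart P x y = ut x y *
          (\<Prod>j<M. y + poly (map_poly of_real (q j)) x + x ^ (2 * L j) * \<psi>t j x)"
    and ordt: "\<forall>i<M. \<forall>j<M. i \<noteq> j \<longrightarrow>
        Ord (\<lambda>x. poly (map_poly of_real (q j - q i)) x
                 + x ^ (2 * L j) * \<psi>t j x - x ^ (2 * L i) * \<psi>t i x) = Oij q L i j"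
  shows "\<forall>j<M.
     Ord (\<lambda>x. Bpart P x (- poly (map_poly of_real (q j)) x - x ^ (2 * L j) * \<psi>t j x))
        = (\<Sum>i<M. Oij q L i j)
   \<and> (\<Sum>i<M. Oij q L i j) = enat (2 * L j) + (\<Sum>i\<in>{..<M} - {j}. Oij q L i j)
   \<and> Ord (\<lambda>x. deriv (\<lambda>y. Apart P x y + of_real t * Bpart P x y)
                 (- poly (map_poly of_real (q j)) x - x ^ (2 * L j) * \<psi>t j x))
        = (\<Sum>i\<in>{..<M} - {j}. Oij q L i j)"
proof (intro allI impI proper_branch.orders_on_branch)
  fix j assume "j < M"
  moreover from qdeg \<open>j < M\<close> have "L j > 0"
    by (metis gr0I mult_0_right not_less0)
  ultimately show "proper_branch P M k u L q \<psi> t ut \<psi>t j"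
    using q0 k_pos u_unit \<psi>_an \<psi>_im factP ut_unit \<psi>t_an factt ordt by unfold_locales blast+
qed

end
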